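(* There exists an instance of 2-SCSS-$(2,2)$ in which no optimum solution is general-reverse-compatible.
   Context: The 2-SCSS-$(k_1,k_2)$ problem: given a directed graph $G=(V,E)$ with edge weights $\omega:E\to\mathbb{R}^{\geq 0}$, terminals $s,t$ and integers $k_1,k_2$, find $k_1$ paths $F_1,\dots,F_{k_1}$ from $s$ to $t$ and $k_2$ paths $B_1,\dots,B_{k_2}$ from $t$ to $s$ minimizing $\sum_{e\in E}\omega(e)\phi(e)$ with $\phi(e)=\max\{|\{i: e\in F_i\}|,\ |\{j: e\in B_j\}|\}$. For an $s\leadsto t$ path $F$ and a $t\leadsto s$ path $B$, let $P_1,\dots,P_d$ be the maximal sub-paths shared by $F$ and $B$, with $P_j$ the $j$-th encountered while traversing $F$; $(F,B)$ is path-reverse-compatible if for every $j\in[d]$, $P_j$ is the $(d-j+1)$-th of them encountered while traversing $B$. A solution $(\{F_1,\dots,F_{k_1}\},\{B_1,\dots,B_{k_2}\})$ is general-reverse-compatible if $(F_i,B_j)$ is path-reverse-compatible for all $i\in[k_1]$, $j\in[k_2]$. *)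

theory Defs
  imports Complex_Main "HOL-Library.Sublist"
begin

definition is_path :: "('v \<times> 'v) set \<Rightarrow> 'v \<Rightarrow> 'v \<Rightarrow> 'v list \<Rightarrow> bool" where
  "is_path E u v p \<longleftrightarrow> p \<noteq> [] \<and> hd p = u \<and> last p = v \<and> distinct p \<and>
     (\<forall>i. Suc i < length p \<longrightarrow> (p ! i, p ! Suc i) \<in> E)"

definition path_edges :: "'v list \<Rightarrow> ('v \<times> 'v) set" where
  "path_edges p = set (zip p (tl p))"

definition phi :: "'v list list \<Rightarrow> 'v list list \<Rightarrow> ('v \<times> 'v) \<Rightarrow> nat" where
  "phi Fs Bs e = max (length (filter (\<lambda>F. e \<in> path_edges F) Fs))
                     (length (filter (\<lambda>B. e \<in> path_edges B) Bs))"

definition scss_cost :: "('v \<times> 'v) set \<Rightarrow> (('v \<times> 'v) \<Rightarrow> real) \<Rightarrow> 'v list list \<Rightarrow> 'v list list \<Rightarrow> real" where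
  "scss_cost E w Fs Bs = (\<Sum>e\<in>E. w e * real (phi Fs Bs e))"

definition scss_feasible :: "('v \<times> 'v) set \<Rightarrow> 'v \<Rightarrow> 'v \<Rightarrow> nat \<Rightarrow> nat \<Rightarrow> 'v list list \<Rightarrow> 'v list list \<Rightarrow> bool" where
  "scss_feasible E s t k1 k2 Fs Bs \<longleftrightarrow>
     length Fs = k1 \<and> length Bs = k2 \<and>
     (\<forall>F\<in>set Fs. is_path E s t F) \<and> (\<forall>B\<in>set Bs. is_path E t s B)"

definition scss_optimal :: "('v \<times> 'v) set \<Rightarrow> (('v \<times> 'v) \<Rightarrow> real) \<Rightarrow> 'v \<Rightarrow> 'v \<Rightarrow> nat \<Rightarrow> nat \<Rightarrow> 'v list list \<Rightarrow> 'v list list \<Rightarrow> bool" where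
  "scss_optimal E w s t k1 k2 Fs Bs \<longleftrightarrow> scss_feasible E s t k1 k2 Fs Bs \<and>
     (\<forall>Fs' Bs'. scss_feasible E s t k1 k2 Fs' Bs' \<longrightarrow> scss_cost E w Fs Bs \<le> scss_cost E w Fs' Bs')"

definition shared_subpath :: "'v list \<Rightarrow> 'v list \<Rightarrow> 'v list \<Rightarrow> bool" where
  "shared_subpath F B P \<longleftrightarrow> 2 \<le> length P \<and> sublist P F \<and> sublist P B"

definition max_shared :: "'v list \<Rightarrow> 'v list \<Rightarrow> 'v list set" where
  "max_shared F B = {P. shared_subpath F B P \<and>
      (\<forall>Q. shared_subpath F B Q \<and> sublist P Q \<longrightarrow> Q = P)}"

definition pos_in :: "'v list \<Rightarrow> 'v list \<Rightarrow> nat" where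
  "pos_in X P = (LEAST i. take (length P) (drop i X) = P)"

definition enc_rank :: "'v list set \<Rightarrow> 'v list \<Rightarrow> 'v list \<Rightarrow> nat" where
  "enc_rank S X P = card {Q\<in>S. pos_in X Q < pos_in X P} + 1"

definition path_rev_compat :: "'v list \<Rightarrow> 'v list \<Rightarrow> bool" where
  "path_rev_compat F B \<longleftrightarrow>
     (let S = max_shared F B; d = card S in
      \<forall>P\<in>S. enc_rank S B P = d - enc_rank S F P + 1)"

definition general_rev_compat :: "'v list list \<Rightarrow> 'v list list \<Rightarrow> bool" where
  "general_rev_compat Fs Bs \<longleftrightarrow> (\<forall>F\<in>set Fs. \<forall>B\<in>set Bs. path_rev_compat F B)"

end

theory Submission
  imports Defs
begin

text \<open>With s = 0 and t = 1, the only s-t paths of the graph below are F1, F2 and the only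
  t-s paths are B1, B2, so there are just sixteen feasible solutions. The weights 10 on (3,6)
  and (3,7) make the optimum 35, attained only by solutions that contain both F1 and B1. These
  two paths share the maximal sub-paths [2,3] and [4,5] and traverse them in the same order.\<close>

lemma is_path_same_ends: "is_path E u u p \<Longrightarrow> p = [u]"
  unfolding is_path_def
  by (metis distinct.simps(2) last_ConsR last_in_set list.collapse)

lemma is_path_ConsE:
  assumes "is_path E u v p" "u \<noteq> v"
  obtains q where "p = u # q" "q \<noteq> []" "(u, hd q) \<in> E" "u \<notin> set q" "is_path E (hd q) v q"
proof -
  from assms obtain q where p: "p = u # q" unfolding is_path_def by (cases p) auto
  have "q \<noteq> []" using assms p unfolding is_path_def by auto
  moreover have "(u, hd q) \<in> E"
    using assms(1) p \<open>q \<noteq> []\<close> unfolding is_path_def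
    by (metis Suc_less_eq hd_conv_nth length_Cons length_greater_0_conv nth_Cons_0 nth_Cons_Suc)
  moreover have "is_path E (hd q) v q" using assms(1) p \<open>q \<noteq> []\<close> unfolding is_path_def by auto
  ultimately show thesis using that assms(1) p unfolding is_path_def by auto
qed

lemma is_path_subset:
  assumes "is_path E u v p" "u \<in> V" "E \<subseteq> V \<times> V"
  shows "set p \<subseteq> V"
proof
  fix x assume "x \<in> set p"
  then obtain i where i: "i < length p" "x = p ! i" by (auto simp: in_set_conv_nth)
  show "x \<in> V"
  proof (cases i)
    case 0 then show ?thesis using assms i unfolding is_path_def by (metis hd_conv_nth)
  next
    case (Suc j)
    then have "(p ! j, p ! i) \<in> E" using assms(1) i unfolding is_path_def by auto
    then show ?thesis using assms(3) i by auto
  qed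
qed

lemma is_path_length_le_card:
  assumes "is_path E u v p" "u \<in> V" "E \<subseteq> V \<times> V" "finite V"
  shows "length p \<le> card V"
proof -
  have "distinct p" using assms(1) unfolding is_path_def by simp
  then have "length p = card (set p)" by (simp add: distinct_card)
  also have "\<dots> \<le> card V" using card_mono[OF assms(4) is_path_subset[OF assms(1-3)]] .
  finally show ?thesis .
qed

fun simple_paths :: "nat \<Rightarrow> ('a \<times> 'a) list \<Rightarrow> 'a \<Rightarrow> 'a \<Rightarrow> 'a list \<Rightarrow> 'a list list" where
  "simple_paths 0 es u v vis = (if u = v then [[u]] else [])"
| "simple_paths (Suc n) es u v vis = (if u = v then [[u]] else
     concat (map (\<lambda>y. map ((#) u) (simple_paths n es y v (u # vis)))
        (map snd (filter (\<lambda>e. fst e = u \<and> snd e \<notin> set (u # vis)) es))))"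

lemma simple_paths_complete:
  "is_path (set es) u v p \<Longrightarrow> set p \<inter> set vis = {} \<Longrightarrow> length p \<le> Suc n \<Longrightarrow>
     p \<in> set (simple_paths n es u v vis)"
proof (induction n arbitrary: u p vis)
  case 0
  then show ?case
    by (cases "u = v") (auto simp: is_path_same_ends elim: is_path_ConsE)
next
  case (Suc n)
  show ?case
  proof (cases "u = v")
    case True then show ?thesis using Suc by (auto simp: is_path_same_ends)
  next
    case False
    with Suc.prems(1) obtain q where
      q: "p = u # q" "q \<noteq> []" "(u, hd q) \<in> set es" "u \<notin> set q" "is_path (set es) (hd q) v q"
      by (rule is_path_ConsE)
    have "hd q \<in> set q" using q(2) by simp
    then have "hd q \<notin> set (u # vis)" using q Suc.prems(2) by (auto simp del: hd_in_set)
    moreover have "q \<in> set (simple_paths n es (hd q) v (u # vis))"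
      using Suc.IH[OF q(5)] q Suc.prems by auto
    ultimately show ?thesis using False q(1,3) by (force simp: image_iff)
  qed
qed

lemma length_2_conv: "length xs = 2 \<longleftrightarrow> (\<exists>a b. xs = [a, b])"
  by (cases xs; cases "tl xs"; auto simp: numeral_eq_Suc)

lemma pos_in_eqI:
  "take (length P) (drop k X) = P \<Longrightarrow> (\<forall>i<k. take (length P) (drop i X) \<noteq> P) \<Longrightarrow>
     pos_in X P = k"
  unfolding pos_in_def by (rule Least_equality) (auto simp: not_less[symmetric])

lemma enc_rank_first:
  assumes "pos_in X P < pos_in X Q"
  shows "enc_rank {P, Q} X P = 1"
proof -
  have "{R \<in> {P, Q}. pos_in X R < pos_in X P} = {}" using assms by auto
  then show ?thesis unfolding enc_rank_def by simp
qed

lemma same_order_not_path_rev_compat: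
  assumes "max_shared F B = {P, Q}" "P \<noteq> Q"
    and "pos_in F P < pos_in F Q" "pos_in B P < pos_in B Q"
  shows "\<not> path_rev_compat F B"
  using enc_rank_first[OF assms(3)] enc_rank_first[OF assms(4)] assms(1,2)
  unfolding path_rev_compat_def Let_def by simp

definition ex_edges :: "(nat \<times> nat) list" where
  "ex_edges = [(0,2),(2,3),(3,6),(6,4),(4,5),(5,7),(7,1),(1,2),(3,7),(7,4),(5,6),(6,0)]"

definition ex_weight :: "nat \<times> nat \<Rightarrow> real" where
  "ex_weight e = (if e = (3,6) \<or> e = (3,7) then 10 else 1)"

abbreviation "F1 \<equiv> [0,2,3,6,4,5,7,1::nat]"
abbreviation "F2 \<equiv> [0,2,3,7,1::nat]"
abbreviation "B1 \<equiv> [1,2,3,7,4,5,6,0::nat]"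
abbreviation "B2 \<equiv> [1,2,3,6,0::nat]"

lemma ex_edges_subset: "set ex_edges \<subseteq> {0..7} \<times> {0..7}"
  by (auto simp: ex_edges_def)

lemma ex_path_length:
  assumes "is_path (set ex_edges) u v p" "u \<in> {0..7}"
  shows "length p \<le> Suc 7"
  using is_path_length_le_card[OF assms ex_edges_subset] by simp

lemma ex_forward_paths:
  assumes p: "is_path (set ex_edges) 0 1 p"
  shows "p = F1 \<or> p = F2"
proof -
  have "p \<in> set (simple_paths 7 ex_edges 0 1 [])"
    using simple_paths_complete[OF p] ex_path_length[OF p] by simp
  then show ?thesis by (simp add: ex_edges_def numeral_eq_Suc; blast)
qed

lemma ex_backward_paths:
  assumes p: "is_path (set ex_edges) 1 0 p"
  shows "p = B1 \<or> p = B2"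
proof -
  have "p \<in> set (simple_paths 7 ex_edges 1 0 [])"
    using simple_paths_complete[OF p] ex_path_length[OF p] by simp
  then show ?thesis by (simp add: ex_edges_def numeral_eq_Suc; blast)
qed

lemma ex_paths:
  "is_path (set ex_edges) 0 1 F1" "is_path (set ex_edges) 0 1 F2"
  "is_path (set ex_edges) 1 0 B1" "is_path (set ex_edges) 1 0 B2"
  by (auto simp: is_path_def ex_edges_def less_Suc_eq numeral_eq_Suc)

lemma ex_feasible_iff:
  "scss_feasible (set ex_edges) 0 1 2 2 Fs Bs \<longleftrightarrow>
     Fs \<in> {[F1,F1], [F1,F2], [F2,F1], [F2,F2]} \<and> Bs \<in> {[B1,B1], [B1,B2], [B2,B1], [B2,B2]}"
proof
  assume feasible: "scss_feasible (set ex_edges) 0 1 2 2 Fs Bs"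
  then obtain a b c d where Fs: "Fs = [a, b]" and Bs: "Bs = [c, d]"
    unfolding scss_feasible_def length_2_conv by blast
  have "a = F1 \<or> a = F2" "b = F1 \<or> b = F2"
    using feasible ex_forward_paths unfolding Fs scss_feasible_def by simp_all
  moreover have "c = B1 \<or> c = B2" "d = B1 \<or> d = B2"
    using feasible ex_backward_paths unfolding Bs scss_feasible_def by simp_all
  ultimately show
    "Fs \<in> {[F1,F1], [F1,F2], [F2,F1], [F2,F2]} \<and> Bs \<in> {[B1,B1], [B1,B2], [B2,B1], [B2,B2]}"
    unfolding Fs Bs by blast
qed (use ex_paths in \<open>auto simp: scss_feasible_def\<close>)

lemma ex_cost_bound:
  assumes "scss_feasible (set ex_edges) 0 1 2 2 Fs Bs"
  shows "35 \<le> scss_cost (set ex_edges) ex_weight Fs Bs"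
    and "scss_cost (set ex_edges) ex_weight Fs Bs \<le> 35 \<Longrightarrow> F1 \<in> set Fs \<and> B1 \<in> set Bs"
  using assms unfolding ex_feasible_iff
  by (auto simp: scss_cost_def phi_def path_edges_def ex_edges_def ex_weight_def)

lemma ex_cost_F1F2_B1B2: "scss_cost (set ex_edges) ex_weight [F1,F2] [B1,B2] = 35"
  by (simp add: scss_cost_def phi_def path_edges_def ex_edges_def ex_weight_def)

lemma ex_optimal: "scss_optimal (set ex_edges) ex_weight 0 1 2 2 [F1,F2] [B1,B2]"
proof (unfold scss_optimal_def, intro conjI allI impI)
  show "scss_feasible (set ex_edges) 0 1 2 2 [F1,F2] [B1,B2]"
    unfolding ex_feasible_iff by simp
  fix Fs Bs assume "scss_feasible (set ex_edges) 0 1 2 2 Fs Bs"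
  then show "scss_cost (set ex_edges) ex_weight [F1,F2] [B1,B2] \<le>
      scss_cost (set ex_edges) ex_weight Fs Bs"
    unfolding ex_cost_F1F2_B1B2 by (rule ex_cost_bound(1))
qed

lemma ex_optimal_uses_F1_B1:
  assumes "scss_optimal (set ex_edges) ex_weight 0 1 2 2 Fs Bs"
  shows "F1 \<in> set Fs" "B1 \<in> set Bs"
proof -
  have feasible: "scss_feasible (set ex_edges) 0 1 2 2 Fs Bs"
    using assms unfolding scss_optimal_def by blast
  have "scss_cost (set ex_edges) ex_weight Fs Bs \<le>
      scss_cost (set ex_edges) ex_weight [F1,F2] [B1,B2]"
    using assms ex_optimal unfolding scss_optimal_def by blast
  then show "F1 \<in> set Fs" "B1 \<in> set Bs"
    using ex_cost_bound(2)[OF feasible] unfolding ex_cost_F1F2_B1B2 by blast+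
qed

lemma ex_max_shared: "max_shared F1 B1 = {[2,3], [4,5]}"
proof -
  have shared: "shared_subpath F1 B1 P \<longleftrightarrow> P = [2,3] \<or> P = [4,5]" for P
  proof
    assume P: "shared_subpath F1 B1 P"
    then have "P \<in> set (sublists F1)" unfolding shared_subpath_def in_set_sublists by blast
    then have "\<exists>Q\<in>set (sublists F1). P = Q" by blast
    then show "P = [2,3] \<or> P = [4,5]" using P
      by (simp only: sublists.simps prefixes.simps list.map append.simps set_simps bex_simps
          bex_empty, elim disjE) (simp_all add: shared_subpath_def sublist_code)
  qed (auto simp: shared_subpath_def sublist_code)
  show ?thesis unfolding max_shared_def shared by (auto simp: sublist_code)
qed

lemma ex_not_path_rev_compat: "\<not> path_rev_compat F1 B1"
proof (rule same_order_not_path_rev_compat[OF ex_max_shared])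
  have "pos_in F1 [2,3] = 1" "pos_in B1 [2,3] = 1"
    by (rule pos_in_eqI; auto simp: less_Suc_eq)+
  moreover have "pos_in F1 [4,5] = 4" "pos_in B1 [4,5] = 4"
    by (rule pos_in_eqI; auto simp: less_Suc_eq numeral_eq_Suc)+
  ultimately show "pos_in F1 [2,3] < pos_in F1 [4,5]" "pos_in B1 [2,3] < pos_in B1 [4,5]"
    by simp_all
qed simp

theorem theorem4:
  shows "\<exists>(V :: nat set) (E :: (nat \<times> nat) set) (w :: (nat \<times> nat) \<Rightarrow> real) s t.
     finite V \<and> E \<subseteq> V \<times> V \<and> s \<in> V \<and> t \<in> V \<and> s \<noteq> t \<and> (\<forall>e\<in>E. 0 \<le> w e) \<and>
     (\<exists>Fs Bs. scss_optimal E w s t 2 2 Fs Bs) \<and>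
     (\<forall>Fs Bs. scss_optimal E w s t 2 2 Fs Bs \<longrightarrow> \<not> general_rev_compat Fs Bs)"
proof (intro exI conjI)
  show "finite {0..7::nat}" "set ex_edges \<subseteq> {0..7} \<times> {0..7}"
    using ex_edges_subset by simp_all
  show "(0::nat) \<in> {0..7}" "(1::nat) \<in> {0..7}" "(0::nat) \<noteq> 1" by auto
  show "\<forall>e\<in>set ex_edges. 0 \<le> ex_weight e" by (simp add: ex_weight_def)
  show "scss_optimal (set ex_edges) ex_weight 0 1 2 2 [F1,F2] [B1,B2]" by (rule ex_optimal)
  show "\<forall>Fs Bs. scss_optimal (set ex_edges) ex_weight 0 1 2 2 Fs Bs \<longrightarrow>
      \<not> general_rev_compat Fs Bs"
    using ex_optimal_uses_F1_B1 ex_not_path_rev_compat unfolding general_rev_compat_def by blast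
qed

end
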